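(* Let $h>0$, $n\in\mathbb{N}$, and let $\lambda:\mathbb{T}\to\mathbb{R}$ be an $n$-cycle with values $\lambda_0,\dots,\lambda_{n-1}\in\mathbb{R}\setminus\{\pm\tfrac1h\}$, such that $0<|e_{\lambda}(nh)|\neq1$ and $0<|e_{-\lambda}(nh)|\neq1$. Define for $t\in\mathbb{T}$ $$p(t)=\lambda(t+2h),\quad q(t)=2\Delta_h\lambda(t+h)+\Delta_h\lambda(t+2h)-\lambda(t+2h)\lambda(t+3h),$$ $$r(t)=\Delta_h^2\lambda(t)+\lambda(t)\Delta_h\lambda(t+2h)-\lambda(t)\lambda(t+2h)\lambda(t+3h).$$ Then the third-order equation $$\Delta_h^3y(t)+p(t)\Delta_h^2y(t)+q(t)\Delta_h y(t)+r(t)y(t)=0,\qquad t\in\mathbb{T},$$ has Hyers–Ulam stability on $\mathbb{T}$ with Hyers–Ulam stability constant $K=K_0(\lambda)\bigl(K_0(-\lambda)\bigr)^2$.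
   Context: Fix $h>0$ and let $\mathbb{T}=\{0,h,2h,3h,\dots\}$. For $x:\mathbb{T}\to\mathbb{R}$, $\Delta_h x(t)=\frac{x(t+h)-x(t)}{h}$ and $\Delta_h^2x=\Delta_h(\Delta_h x)$, $\Delta_h^3x=\Delta_h(\Delta_h^2 x)$. An $n$-cycle is a function $\mu:\mathbb{T}\to\mathbb{R}$ with $\mu(t)=\mu_k$ whenever $t/h\equiv k\pmod n$, $k\in\{0,\dots,n-1\}$, which has period $n$ and no smaller period. For such $\mu$ define the discrete exponential $e_\mu(t)=\prod_{k=0}^{t/h-1}(1+h\mu(kh))$ (empty product $=1$), so $e_\mu(nh)=\prod_{k=0}^{n-1}(1+h\mu_k)$. For $k\in\{0,\dots,n-1\}$ define $$S_k(\mu)=\sum_{j=1}^{n}\prod_{i=0}^{j-1}\frac{1}{|1+h\mu_{(k+i)\bmod n}|},$$ (e.g. $S_0(\mu)=\frac{1}{|1+h\mu_0|}+\frac{1}{|1+h\mu_0||1+h\mu_1|}+\dots+\frac{1}{|1+h\mu_0|\cdots|1+h\mu_{n-1}|}$), and, when $0<|e_\mu(nh)|\neq1$, $$K_0(\mu)=\frac{h|e_\mu(nh)|}{\bigl|1-|e_\mu(nh)|\bigr|}\max\{S_0(\mu),\dots,S_{n-1}(\mu)\}.$$ Here $-\lambda$ denotes the $n$-cycle with values $-\lambda_0,\dots,-\lambda_{n-1}$. Hyers–Ulam stability: an equation $\mathcal{L}[y](t)=f(t)$, $t\in\mathbb{T}$ (with $\mathcal{L}$ a linear difference operator) has Hyers–Ulam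 stability on $\mathbb{T}$ with Hyers–Ulam stability constant $K>0$ if for every $\varepsilon>0$ and every $\xi:\mathbb{T}\to\mathbb{R}$ with $|\mathcal{L}[\xi](t)-f(t)|\le\varepsilon$ for all $t\in\mathbb{T}$, there is a solution $y:\mathbb{T}\to\mathbb{R}$ of the equation with $|\xi(t)-y(t)|\le K\varepsilon$ for all $t\in\mathbb{T}$. The minimum Hyers–Ulam stability constant is the smallest such $K$. *)

theory Defs
  imports Complex_Main
begin

text \<open>The time scale hZ_{\<ge>0} = {0,h,2h,...} is indexed by nat: a function x on T is
  represented as x :: nat \<Rightarrow> real with x k = x(kh).\<close>

definition dlt :: "real \<Rightarrow> (nat \<Rightarrow> real) \<Rightarrow> nat \<Rightarrow> real" where
  "dlt h x k = (x (Suc k) - x k) / h"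

definition is_cycle :: "nat \<Rightarrow> (nat \<Rightarrow> real) \<Rightarrow> bool" where
  "is_cycle n \<mu> \<longleftrightarrow> n \<ge> 1 \<and> (\<forall>k. \<mu> (k + n) = \<mu> k)
     \<and> (\<forall>m. 0 < m \<and> m < n \<longrightarrow> \<not> (\<forall>k. \<mu> (k + m) = \<mu> k))"

definition dexp :: "real \<Rightarrow> (nat \<Rightarrow> real) \<Rightarrow> nat \<Rightarrow> real" where
  "dexp h \<mu> k = (\<Prod>i<k. 1 + h * \<mu> i)"

definition Sk :: "real \<Rightarrow> nat \<Rightarrow> (nat \<Rightarrow> real) \<Rightarrow> nat \<Rightarrow> real" where
  "Sk h n \<mu> k = (\<Sum>j=1..n. \<Prod>i<j. 1 / \<bar>1 + h * \<mu> ((k + i) mod n)\<bar>)"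

definition K0 :: "real \<Rightarrow> nat \<Rightarrow> (nat \<Rightarrow> real) \<Rightarrow> real" where
  "K0 h n \<mu> = h * \<bar>dexp h \<mu> n\<bar> / \<bar>1 - \<bar>dexp h \<mu> n\<bar>\<bar>
      * Max {Sk h n \<mu> k | k. k < n}"

definition hu_stable :: "((nat \<Rightarrow> real) \<Rightarrow> nat \<Rightarrow> real) \<Rightarrow> (nat \<Rightarrow> real) \<Rightarrow> real \<Rightarrow> bool" where
  "hu_stable L f K \<longleftrightarrow> K > 0 \<and>
     (\<forall>\<epsilon>>0. \<forall>\<xi>. (\<forall>t. \<bar>L \<xi> t - f t\<bar> \<le> \<epsilon>) \<longrightarrow>
        (\<exists>y. (\<forall>t. L y t = f t) \<and> (\<forall>t. \<bar>\<xi> t - y t\<bar> \<le> K * \<epsilon>)))"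

end

theory Submission
  imports Defs
begin

text \<open>The operator factors as \<open>(\<Delta>\<^sub>h - \<lambda>(t+3)) (\<Delta>\<^sub>h + \<lambda>(t+2)) (\<Delta>\<^sub>h + \<lambda>(t))\<close>, and
  Hyers--Ulam stability of a composition holds with the product of the constants, so it
  suffices to treat \<open>\<Delta>\<^sub>h y - \<mu>(t+c) y = g\<close> with \<open>\<mu>\<close> periodic. There the error \<open>d = \<xi> - y\<close>
  has to solve \<open>d(t+1) = a(t) d(t) + h f(t)\<close> with \<open>|f| \<le> \<epsilon>\<close> and \<open>a = 1 + h\<mu>\<close>. If the
  monodromy \<open>e = |\<Prod>\<^sub>i\<^sub><\<^sub>n a(i)|\<close> is below 1 we iterate forwards from \<open>d(0) = 0\<close>,
  otherwise we sum the recurrence backwards from infinity; in both cases the weight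
  \<open>e/|1 - e| \<cdot> S\<^sub>k\<close> satisfies exactly the recursive inequality that propagates the bound.\<close>

lemma periodic_add_mult:
  fixes f :: "nat \<Rightarrow> 'a" and k m n :: nat
  assumes "\<forall>k. f (k + n) = f k"
  shows "f (k + m * n) = f k"
proof (induction m)
  case (Suc m)
  have "f (k + Suc m * n) = f ((k + m * n) + n)" by (simp add: algebra_simps)
  then show ?case using assms Suc by simp
qed simp

lemma periodic_mod:
  fixes f :: "nat \<Rightarrow> 'a" and n x :: nat
  assumes "\<forall>k. f (k + n) = f k"
  shows "f (x mod n) = f x"
  using periodic_add_mult[OF assms, of "x mod n" "x div n"] by (metis mod_div_mult_eq)

lemma prod_lessThan_shift_periodic:
  fixes f :: "nat \<Rightarrow> 'a::idom"
  assumes per: "\<forall>k. f (k + n) = f k" and nz: "\<forall>k. f k \<noteq> 0"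
  shows "(\<Prod>i<n. f (t + i)) = (\<Prod>i<n. f i)"
proof (induction t)
  case (Suc t)
  have "f t * (\<Prod>i<n. f (Suc t + i)) = (\<Prod>i<Suc n. f (t + i))"
    by (subst prod.lessThan_Suc_shift) simp
  also have "\<dots> = (\<Prod>i<n. f (t + i)) * f t"
    using per by (simp add: add.commute[of n t])
  finally show ?case using Suc nz by (simp add: mult.commute)
qed simp

lemma bounded_solution_forward:
  fixes a f G :: "nat \<Rightarrow> real"
  assumes f: "\<forall>t. \<bar>f t\<bar> \<le> \<epsilon>" and G0: "G 0 \<ge> 0"
    and G: "\<forall>t. \<bar>a t\<bar> * G t + 1 \<le> G (Suc t)"
  shows "\<exists>d. (\<forall>t. d (Suc t) = a t * d t + f t) \<and> (\<forall>t. \<bar>d t\<bar> \<le> \<epsilon> * G t)"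
proof -
  define d where "d = rec_nat 0 (\<lambda>t dt. a t * dt + f t)"
  have dS: "d (Suc t) = a t * d t + f t" for t by (simp add: d_def)
  have eps: "\<epsilon> \<ge> 0" using f by (meson abs_ge_zero order_trans)
  have "\<bar>d t\<bar> \<le> \<epsilon> * G t" for t
  proof (induction t)
    case 0
    then show ?case using G0 eps by (simp add: d_def)
  next
    case (Suc t)
    have "\<bar>d (Suc t)\<bar> \<le> \<bar>a t\<bar> * \<bar>d t\<bar> + \<bar>f t\<bar>"
      unfolding dS by (metis abs_mult abs_triangle_ineq)
    also have "\<dots> \<le> \<bar>a t\<bar> * (\<epsilon> * G t) + \<epsilon>"
      using Suc f by (intro add_mono mult_left_mono) auto
    also have "\<dots> = \<epsilon> * (\<bar>a t\<bar> * G t + 1)" by (simp add: algebra_simps)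
    also have "\<dots> \<le> \<epsilon> * G (Suc t)" using G eps by (intro mult_left_mono) auto
    finally show ?case .
  qed
  then show ?thesis using dS by blast
qed

lemma bounded_solution_backward:
  fixes a f G :: "nat \<Rightarrow> real"
  assumes nz: "\<forall>t. a t \<noteq> 0" and f: "\<forall>t. \<bar>f t\<bar> \<le> \<epsilon>" and Gnn: "\<forall>t. G t \<ge> 0"
    and G: "\<forall>t. 1 + G (Suc t) \<le> \<bar>a t\<bar> * G t"
  shows "\<exists>d. (\<forall>t. d (Suc t) = a t * d t + f t) \<and> (\<forall>t. \<bar>d t\<bar> \<le> \<epsilon> * G t)"
proof -
  define Q where "Q t j = (\<Prod>i<j. 1 / a (t + i))" for t j
  define P where "P t j = \<bar>Q t j\<bar>" for t j
  have QSuc: "Q t (Suc j) = 1 / a t * Q (Suc t) j" for t j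
    unfolding Q_def by (subst prod.lessThan_Suc_shift) simp
  have PSuc: "P t (Suc j) = 1 / \<bar>a t\<bar> * P (Suc t) j" for t j
    unfolding P_def QSuc abs_mult by simp
  have Pnn: "P t j \<ge> 0" for t j unfolding P_def by simp
  have partial: "(\<Sum>j<N. P t (Suc j)) \<le> G t" for N t
  proof (induction N arbitrary: t)
    case (Suc N)
    have "(\<Sum>j<Suc N. P t (Suc j)) = 1 / \<bar>a t\<bar> * (\<Sum>j<Suc N. P (Suc t) j)"
      by (simp only: PSuc sum_distrib_left)
    also have "(\<Sum>j<Suc N. P (Suc t) j) = 1 + (\<Sum>j<N. P (Suc t) (Suc j))"
      by (subst sum.lessThan_Suc_shift) (simp add: P_def Q_def)
    also have "1 / \<bar>a t\<bar> * \<dots> \<le> 1 / \<bar>a t\<bar> * (1 + G (Suc t))"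
      using Suc.IH[of "Suc t"] by (intro mult_left_mono) auto
    also have "\<dots> \<le> G t" using G nz by (simp add: field_simps)
    finally show ?case .
  qed (simp add: Gnn)
  have summP: "summable (\<lambda>j. P t (Suc j))" for t
    using Pnn partial by (intro summableI_nonneg_bounded) auto
  have term_bound: "\<bar>f (t + j) * Q t (Suc j)\<bar> \<le> \<epsilon> * P t (Suc j)" for t j
    unfolding abs_mult P_def using f by (intro mult_right_mono) auto
  have summ_abs: "summable (\<lambda>j. \<bar>f (t + j) * Q t (Suc j)\<bar>)" for t
    using term_bound by (intro summable_comparison_test'[OF summable_mult[OF summP[of t]], of 0 _ \<epsilon>])
      auto
  have summ: "summable (\<lambda>j. f (t + j) * Q t (Suc j))" for t
    by (rule summable_rabs_cancel[OF summ_abs])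
  define S where "S t = (\<Sum>j. f (t + j) * Q t (Suc j))" for t
  have S_bound: "\<bar>S t\<bar> \<le> \<epsilon> * G t" for t
  proof -
    have "\<bar>S t\<bar> \<le> (\<Sum>j. \<bar>f (t + j) * Q t (Suc j)\<bar>)"
      unfolding S_def by (rule summable_rabs[OF summ_abs])
    also have "\<dots> \<le> (\<Sum>j. \<epsilon> * P t (Suc j))"
      using summ_abs summable_mult[OF summP] term_bound by (intro suminf_le) auto
    also have "\<dots> = \<epsilon> * (\<Sum>j. P t (Suc j))" using summP by (simp add: suminf_mult)
    also have "\<dots> \<le> \<epsilon> * G t"
      using summP partial f by (intro mult_left_mono suminf_le_const) (auto intro: order_trans)
    finally show ?thesis .
  qed
  have S_step: "a t * S t = f t + S (Suc t)" for t
  proof -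
    have "S t = f t * Q t (Suc 0) + (\<Sum>j. f (t + Suc j) * Q t (Suc (Suc j)))"
      unfolding S_def using suminf_split_head[OF summ[of t]] by simp
    also have "(\<Sum>j. f (t + Suc j) * Q t (Suc (Suc j))) = (\<Sum>j. 1 / a t * (f (Suc t + j) * Q (Suc t) (Suc j)))"
      unfolding QSuc[of t "Suc _"] by (simp add: algebra_simps)
    also have "\<dots> = 1 / a t * S (Suc t)"
      unfolding S_def by (rule suminf_mult[OF summ])
    finally show ?thesis using nz by (simp add: Q_def field_simps)
  qed
  show ?thesis
    using S_step S_bound
    by (intro exI[of _ "\<lambda>t. - S t"]) (auto simp: algebra_simps)
qed

lemma periodic_weight_step:
  fixes a :: "nat \<Rightarrow> real"
  assumes per: "\<forall>t. a (t + n) = a t" and nz: "\<forall>t. a t \<noteq> 0"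
  defines "S \<equiv> \<lambda>t. \<Sum>j<n. \<Prod>i<Suc j. 1 / \<bar>a (t + i)\<bar>"
  shows "\<bar>a t\<bar> * S t = 1 + S (Suc t) - 1 / \<bar>\<Prod>i<n. a i\<bar>"
proof -
  define P where "P t j = (\<Prod>i<j. 1 / \<bar>a (t + i)\<bar>)" for t j
  have PSuc: "P t (Suc j) = 1 / \<bar>a t\<bar> * P (Suc t) j" for t j
    unfolding P_def by (subst prod.lessThan_Suc_shift) simp
  have Pn: "P t n = 1 / \<bar>\<Prod>i<n. a i\<bar>" for t
  proof -
    have "P t n = 1 / \<bar>\<Prod>i<n. a (t + i)\<bar>" by (simp add: P_def abs_prod prod_dividef)
    then show ?thesis unfolding prod_lessThan_shift_periodic[OF per nz] .
  qed
  have "\<bar>a t\<bar> * S t = (\<Sum>j<n. P (Suc t) j)"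
    unfolding S_def P_def[symmetric] PSuc sum_distrib_left using nz by simp
  also have "\<dots> = (\<Sum>j<Suc n. P (Suc t) j) - P (Suc t) n" by simp
  also have "(\<Sum>j<Suc n. P (Suc t) j) = 1 + S (Suc t)"
    unfolding S_def P_def by (subst sum.lessThan_Suc_shift) simp
  finally show ?thesis using Pn by simp
qed

lemma bounded_solution_periodic:
  fixes a f :: "nat \<Rightarrow> real"
  assumes per: "\<forall>t. a (t + n) = a t" and nz: "\<forall>t. a t \<noteq> 0"
    and e1: "\<bar>\<Prod>i<n. a i\<bar> \<noteq> 1" and f: "\<forall>t. \<bar>f t\<bar> \<le> \<epsilon>"
  defines "e \<equiv> \<bar>\<Prod>i<n. a i\<bar>"
    and "S \<equiv> \<lambda>t. \<Sum>j<n. \<Prod>i<Suc j. 1 / \<bar>a (t + i)\<bar>"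
  shows "\<exists>d. (\<forall>t. d (Suc t) = a t * d t + f t) \<and> (\<forall>t. \<bar>d t\<bar> \<le> \<epsilon> * (e / \<bar>1 - e\<bar> * S t))"
proof -
  define G where "G t = e / \<bar>1 - e\<bar> * S t" for t
  have e0: "e > 0" unfolding e_def using nz by simp
  have e_ne: "e \<noteq> 1" using e1 by (simp add: e_def)
  have Gnn: "G t \<ge> 0" for t unfolding G_def S_def using e0 by (simp add: sum_nonneg prod_nonneg)
  have weight_step: "\<bar>a t\<bar> * S t = 1 + S (Suc t) - 1 / e" for t
    using periodic_weight_step[OF per nz, of t] unfolding S_def e_def by simp
  have step: "\<bar>a t\<bar> * G t = G (Suc t) + (e - 1) / \<bar>1 - e\<bar>" for t
  proof -
    have "\<bar>a t\<bar> * G t = e / \<bar>1 - e\<bar> * (\<bar>a t\<bar> * S t)" by (simp add: G_def)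
    also have "\<dots> = (e * S (Suc t) + (e - 1)) / \<bar>1 - e\<bar>"
      unfolding weight_step using e0 by (simp add: algebra_simps diff_divide_distrib)
    also have "\<dots> = G (Suc t) + (e - 1) / \<bar>1 - e\<bar>"
      unfolding G_def by (simp add: add_divide_distrib)
    finally show ?thesis .
  qed
  consider "e < 1" | "e > 1" using e_ne by linarith
  then have "\<exists>d. (\<forall>t. d (Suc t) = a t * d t + f t) \<and> (\<forall>t. \<bar>d t\<bar> \<le> \<epsilon> * G t)"
  proof cases
    case 1
    then have "(e - 1) / \<bar>1 - e\<bar> = -1" by (simp add: divide_eq_minus_1_iff)
    then show ?thesis using step Gnn by (intro bounded_solution_forward[OF f]) auto
  next
    case 2
    then have "(e - 1) / \<bar>1 - e\<bar> = 1" by simp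
    then show ?thesis using step Gnn by (intro bounded_solution_backward[OF nz f]) auto
  qed
  then show ?thesis unfolding G_def .
qed

lemma Sk_mod_eq:
  assumes "\<forall>k. \<mu> (k + n) = \<mu> k"
  shows "Sk h n \<mu> (k mod n) = (\<Sum>j<n. \<Prod>i<Suc j. 1 / \<bar>1 + h * \<mu> (k + i)\<bar>)"
  unfolding Sk_def One_nat_def sum.atLeast1_atMost_eq
  by (simp add: mod_add_left_eq periodic_mod[OF assms] del: prod.lessThan_Suc)

lemma K0_pos:
  assumes h: "h > 0" and n: "n \<ge> 1" and nz: "\<forall>k. 1 + h * \<mu> k \<noteq> 0"
    and e1: "\<bar>dexp h \<mu> n\<bar> \<noteq> 1"
  shows "K0 h n \<mu> > 0"
proof -
  have "0 < Sk h n \<mu> 0" unfolding Sk_def using n nz by (intro sum_pos prod_pos) auto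
  also have "\<dots> \<le> Max {Sk h n \<mu> k | k. k < n}" using n by (intro Max_ge) auto
  finally show ?thesis
    unfolding K0_def using h nz e1 by (simp add: dexp_def)
qed

lemma first_order_hu_stable:
  fixes \<mu> g :: "nat \<Rightarrow> real"
  assumes h: "h > 0" and n: "n \<ge> 1" and per: "\<forall>k. \<mu> (k + n) = \<mu> k"
    and nz: "\<forall>k. 1 + h * \<mu> k \<noteq> 0" and e1: "\<bar>dexp h \<mu> n\<bar> \<noteq> 1"
  shows "hu_stable (\<lambda>y t. dlt h y t - \<mu> (t + c) * y t) g (K0 h n \<mu>)"
  unfolding hu_stable_def
proof (intro conjI allI impI)
  show "K0 h n \<mu> > 0" using K0_pos[OF h n nz e1] .
  fix \<epsilon> :: real and \<xi> :: "nat \<Rightarrow> real"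
  assume approx: "\<forall>t. \<bar>dlt h \<xi> t - \<mu> (t + c) * \<xi> t - g t\<bar> \<le> \<epsilon>"
  define a where "a t = 1 + h * \<mu> (t + c)" for t
  define e where "e = \<bar>\<Prod>i<n. a i\<bar>"
  define S where "S t = (\<Sum>j<n. \<Prod>i<Suc j. 1 / \<bar>a (t + i)\<bar>)" for t
  have a_per: "\<forall>t. a (t + n) = a t" using per by (metis a_def add.commute add.left_commute)
  have a_nz: "\<forall>t. a t \<noteq> 0" using nz by (simp add: a_def)
  have e_dexp: "e = \<bar>dexp h \<mu> n\<bar>"
    using prod_lessThan_shift_periodic[of "\<lambda>k. 1 + h * \<mu> k" n c] per nz
    by (simp add: e_def a_def dexp_def add_ac)
  have e_ne: "\<bar>\<Prod>i<n. a i\<bar> \<noteq> 1" using e1 e_dexp e_def by simp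
  have "\<forall>t. \<bar>h * (dlt h \<xi> t - \<mu> (t + c) * \<xi> t - g t)\<bar> \<le> h * \<epsilon>"
    using approx h by (simp add: abs_mult)
  from bounded_solution_periodic[OF a_per a_nz e_ne this, folded e_def S_def]
  obtain d where d_step: "\<And>t. d (Suc t) = a t * d t + h * (dlt h \<xi> t - \<mu> (t + c) * \<xi> t - g t)"
    and d_bound: "\<And>t. \<bar>d t\<bar> \<le> h * \<epsilon> * (e / \<bar>1 - e\<bar> * S t)"
    by blast
  have S_le: "S t \<le> Max {Sk h n \<mu> k | k. k < n}" for t
  proof -
    have "S t = Sk h n \<mu> ((t + c) mod n)"
      unfolding Sk_mod_eq[OF per] S_def a_def by (simp add: add_ac)
    then show ?thesis using n by (intro Max_ge) auto
  qed
  show "\<exists>y. (\<forall>t. dlt h y t - \<mu> (t + c) * y t = g t) \<and> (\<forall>t. \<bar>\<xi> t - y t\<bar> \<le> K0 h n \<mu> * \<epsilon>)"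
  proof (intro exI[of _ "\<lambda>t. \<xi> t - d t"] conjI allI)
    fix t
    show "dlt h (\<lambda>t. \<xi> t - d t) t - \<mu> (t + c) * (\<xi> t - d t) = g t"
      using h unfolding dlt_def d_step a_def by (simp add: field_simps dlt_def)
    have eps: "\<epsilon> \<ge> 0" using approx by (meson abs_ge_zero order_trans)
    have "\<bar>d t\<bar> \<le> \<epsilon> * (h * e / \<bar>1 - e\<bar> * S t)" using d_bound[of t] by (simp add: algebra_simps)
    also have "\<dots> \<le> \<epsilon> * K0 h n \<mu>"
      unfolding K0_def e_dexp[symmetric] using S_le h eps
      by (intro mult_left_mono) (auto simp: e_def)
    finally show "\<bar>\<xi> t - (\<xi> t - d t)\<bar> \<le> K0 h n \<mu> * \<epsilon>" by (simp add: mult.commute)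
  qed
qed

lemma hu_stable_comp:
  assumes outer: "hu_stable A f KA" and inner: "\<forall>g. hu_stable B g KB"
  shows "hu_stable (\<lambda>y. A (B y)) f (KA * KB)"
  unfolding hu_stable_def
proof (intro conjI allI impI)
  show "KA * KB > 0" using outer inner by (simp add: hu_stable_def)
  fix \<epsilon> :: real and \<xi>
  assume "\<epsilon> > 0" and approx: "\<forall>t. \<bar>A (B \<xi>) t - f t\<bar> \<le> \<epsilon>"
  obtain u where Au: "\<forall>t. A u t = f t" and u: "\<forall>t. \<bar>B \<xi> t - u t\<bar> \<le> KA * \<epsilon>"
    using outer approx \<open>\<epsilon> > 0\<close> unfolding hu_stable_def by blast
  have "KA * \<epsilon> > 0" using outer \<open>\<epsilon> > 0\<close> by (simp add: hu_stable_def)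
  then obtain y where By: "\<forall>t. B y t = u t" and y: "\<forall>t. \<bar>\<xi> t - y t\<bar> \<le> KB * (KA * \<epsilon>)"
    using inner u unfolding hu_stable_def by blast
  have "B y = u" using By by auto
  then show "\<exists>y. (\<forall>t. A (B y) t = f t) \<and> (\<forall>t. \<bar>\<xi> t - y t\<bar> \<le> KA * KB * \<epsilon>)"
    using Au y by (auto simp: algebra_simps)
qed

lemma third_order_factorization:
  assumes "h \<noteq> 0"
  shows "dlt h (dlt h (dlt h y)) t + lam (t + 2) * dlt h (dlt h y) t
       + (2 * dlt h lam (t + 1) + dlt h lam (t + 2) - lam (t + 2) * lam (t + 3)) * dlt h y t
       + (dlt h (dlt h lam) t + lam t * dlt h lam (t + 2) - lam t * lam (t + 2) * lam (t + 3)) * y t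
     = dlt h (\<lambda>s. dlt h (\<lambda>u. dlt h y u + lam u * y u) s + lam (s + 2) * (dlt h y s + lam s * y s)) t
       - lam (t + 3) * (dlt h (\<lambda>u. dlt h y u + lam u * y u) t + lam (t + 2) * (dlt h y t + lam t * y t))"
  using assms by (simp add: dlt_def field_simps numeral_eq_Suc)

theorem theorem5p2:
  fixes h :: real and n :: nat and lam :: "nat \<Rightarrow> real"
  assumes "h > 0"
    and "is_cycle n lam"
    and "\<And>k. lam k \<noteq> 1 / h \<and> lam k \<noteq> - 1 / h"
    and "0 < \<bar>dexp h lam n\<bar>" and "\<bar>dexp h lam n\<bar> \<noteq> 1"
    and "0 < \<bar>dexp h (\<lambda>k. - lam k) n\<bar>" and "\<bar>dexp h (\<lambda>k. - lam k) n\<bar> \<noteq> 1"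
  shows "let p = (\<lambda>t. lam (t + 2));
             q = (\<lambda>t. 2 * dlt h lam (t + 1) + dlt h lam (t + 2) - lam (t + 2) * lam (t + 3));
             r = (\<lambda>t. dlt h (dlt h lam) t + lam t * dlt h lam (t + 2)
                       - lam t * lam (t + 2) * lam (t + 3));
             L = (\<lambda>y t. dlt h (dlt h (dlt h y)) t + p t * dlt h (dlt h y) t
                       + q t * dlt h y t + r t * y t)
         in hu_stable L (\<lambda>t. 0) (K0 h n lam * (K0 h n (\<lambda>k. - lam k))^2)"
proof -
  \<comment> \<open>The hypotheses \<open>0 < |e\<^sub>\<plusminus>\<^sub>\<lambda>(nh)|\<close> are implied by \<open>\<lambda>\<^sub>k \<noteq> \<plusminus>1/h\<close> and not needed.\<close>
  have h: "h > 0" and n: "n \<ge> 1" and per: "\<forall>k. lam (k + n) = lam k"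
    using assms(1,2) unfolding is_cycle_def by auto
  have "h * lam k \<noteq> 1" "h * lam k \<noteq> -1" for k
    using assms(1) assms(3)[of k] by (auto simp: field_simps)
  then have nz: "\<forall>k. 1 + h * lam k \<noteq> 0" and nz_neg: "\<forall>k. 1 + h * - lam k \<noteq> 0"
    by (auto simp: add_eq_0_iff)
  have per_neg: "\<forall>k. - lam (k + n) = - lam k" using per by simp
  have stable_lam: "hu_stable (\<lambda>y t. dlt h y t - lam (t + 3) * y t) g (K0 h n lam)" for g
    using first_order_hu_stable[OF h n per nz assms(5)] .
  have stable_neg: "hu_stable (\<lambda>y t. dlt h y t + lam (t + c) * y t) g (K0 h n (\<lambda>k. - lam k))" for g c
    using first_order_hu_stable[OF h n per_neg nz_neg assms(7)] by simp
  have inner: "hu_stable (\<lambda>y t. dlt h (\<lambda>u. dlt h y u + lam u * y u) t + lam (t + 2) * (dlt h y t + lam t * y t))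
                 g (K0 h n (\<lambda>k. - lam k) * K0 h n (\<lambda>k. - lam k))" for g
    using hu_stable_comp[OF stable_neg[where c=2] allI[OF stable_neg[where c=0]]] by simp
  show ?thesis
    using hu_stable_comp[OF stable_lam allI[OF inner]]
    unfolding Let_def power2_eq_square third_order_factorization[OF less_imp_neq[OF h, symmetric]] .
qed

end
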